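(* Let $n\ge 1$ be an integer and let $\mathcal{H}_r$, $\mathcal{H}_{r'}$ be separable Hilbert spaces with $\dim\mathcal{H}_r=\dim\mathcal{H}_{r'}$. Let $\mathcal{H}_c\cong\mathbb{C}^n$ and $\mathcal{H}_{c'}\cong\mathbb{C}^n$ have orthonormal "time" bases $(|\tau\rangle_c)_{\tau\in\mathbb{Z}_n}$ and $(|\tau\rangle_{c'})_{\tau\in\mathbb{Z}_n}$, and let $X_n$, $X_n'$ be the shift operators $X_n|\tau\rangle_c=|\tau+1 \bmod n\rangle_c$, $X_n'|\tau\rangle_{c'}=|\tau+1\bmod n\rangle_{c'}$. Let $U_r$ and $U_{r'}$ be unitary operators on $\mathcal{H}_r$ and $\mathcal{H}_{r'}$ with $U_r^n=I_r$ and $U_{r'}^n=I_{r'}$, and set $U=X_n\otimes U_r$ and $U'=X_n'\otimes U_{r'}$. Let $|\psi(0)\rangle_r\in\mathcal{H}_r$ and $|\psi'(0)\rangle_{r'}\in\mathcal{H}_{r'}$ be any unit vectors, and for $\tau\in\mathbb{Z}_n$ define $|\Psi(\tau)\rangle=|\tau\rangle_c\,U_r^\tau|\psi(0)\rangle_r$ and $|\Psi'(\tau)\rangle=|\tau\rangle_{c'}\,U_{r'}^\tau|\psi'(0)\rangle_{r'}$. Then there exists a unitary operator $S:\mathcal{H}_c\otimes\mathcal{H}_r\to\mathcal{H}_{c'}\otimes\mathcal{H}_{r'}$ such that $|\Psi'(\tau)\rangle=S|\Psi(\tau)\rangle$ for all $\tau\in\mathbb{Z}_n$, and $U'=SUS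^{-1}$.
   Context: This is the finite discrete-time Page-Wootters setting: a clock with $n$ ticks whose one-step evolution is the cyclic shift, a "rest of the world" with one-step unitary evolution $U_r$ satisfying the cyclicity condition $U_r^n=I$, total one-step evolution $U=X_n\otimes U_r$, and temporal states $|\Psi(\tau)\rangle$ as defined in the claim. *)

theory Defs
  imports "HOL-Analysis.Analysis"
begin

text \<open>A complex Hilbert space is modelled as a real Hilbert space (type of sort
  real_inner and complete_space) together with an orthogonal complex structure J
  (multiplication by the imaginary unit).\<close>

definition complex_structure :: "('a::real_inner \<Rightarrow> 'a) \<Rightarrow> bool" where
  "complex_structure J \<longleftrightarrow> linear J \<and> (\<forall>x. J (J x) = - x) \<and>
     (\<forall>x y. inner (J x) (J y) = inner x y)"

definition cscale :: "('a::real_vector \<Rightarrow> 'a) \<Rightarrow> complex \<Rightarrow> 'a \<Rightarrow> 'a" where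
  "cscale J c x = Re c *\<^sub>R x + Im c *\<^sub>R J x"

text \<open>complex inner product, antilinear in the first argument\<close>
definition cinner :: "('a::real_inner \<Rightarrow> 'a) \<Rightarrow> 'a \<Rightarrow> 'a \<Rightarrow> complex" where
  "cinner J x y = Complex (inner x y) (inner (J x) y)"

definition cspan :: "('a::real_vector \<Rightarrow> 'a) \<Rightarrow> 'a set \<Rightarrow> 'a set" where
  "cspan J B = {(\<Sum>b\<in>F. cscale J (c b) b) | F c. finite F \<and> F \<subseteq> B}"

definition separable_hilbert :: "('a::{real_inner,complete_space} \<Rightarrow> 'a) \<Rightarrow> bool" where
  "separable_hilbert J \<longleftrightarrow> complex_structure J \<and>
     (\<exists>D::'a set. countable D \<and> closure D = UNIV)"

definition c_onb :: "('a::real_inner \<Rightarrow> 'a) \<Rightarrow> 'a set \<Rightarrow> bool" where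
  "c_onb J B \<longleftrightarrow> (\<forall>b\<in>B. \<forall>b'\<in>B. cinner J b b' = (if b = b' then 1 else 0)) \<and>
     closure (cspan J B) = UNIV"

definition same_hilbert_dim ::
    "('a::real_inner \<Rightarrow> 'a) \<Rightarrow> ('b::real_inner \<Rightarrow> 'b) \<Rightarrow> bool" where
  "same_hilbert_dim J J' \<longleftrightarrow>
     (\<exists>B B' f. c_onb J B \<and> c_onb J' B' \<and> bij_betw f B B')"

definition cunitary :: "('a::real_normed_vector \<Rightarrow> 'a) \<Rightarrow> ('b::real_normed_vector \<Rightarrow> 'b)
    \<Rightarrow> ('a \<Rightarrow> 'b) \<Rightarrow> bool" where
  "cunitary J J' U \<longleftrightarrow> (\<forall>x y. U (x + y) = U x + U y) \<and>
     (\<forall>c x. U (cscale J c x) = cscale J' c (U x)) \<and>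
     (\<forall>x. norm (U x) = norm x) \<and> surj U"

text \<open>The tensor product C^n (x) H, with C^n carrying the orthonormal time basis
  |0>,...,|n-1>, is identified with H^n: a vector is a function nat => H vanishing
  from index n on; f k is the component along |k>.\<close>

definition clock_space :: "nat \<Rightarrow> (nat \<Rightarrow> 'a::zero) set" where
  "clock_space n = {f. \<forall>k\<ge>n. f k = 0}"

definition ket :: "nat \<Rightarrow> 'a::zero \<Rightarrow> nat \<Rightarrow> 'a" where
  "ket \<tau> v = (\<lambda>k. if k = \<tau> then v else 0)"

definition tadd :: "(nat \<Rightarrow> 'a::plus) \<Rightarrow> (nat \<Rightarrow> 'a) \<Rightarrow> nat \<Rightarrow> 'a" where
  "tadd f g = (\<lambda>k. f k + g k)"

definition tcscale :: "('a::real_vector \<Rightarrow> 'a) \<Rightarrow> complex \<Rightarrow> (nat \<Rightarrow> 'a) \<Rightarrow> nat \<Rightarrow> 'a" where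
  "tcscale J c f = (\<lambda>k. cscale J c (f k))"

definition tnorm :: "nat \<Rightarrow> (nat \<Rightarrow> 'a::real_normed_vector) \<Rightarrow> real" where
  "tnorm n f = sqrt (\<Sum>k<n. (norm (f k))\<^sup>2)"

definition tunitary :: "nat \<Rightarrow> ('a::real_normed_vector \<Rightarrow> 'a) \<Rightarrow> ('b::real_normed_vector \<Rightarrow> 'b)
    \<Rightarrow> ((nat \<Rightarrow> 'a) \<Rightarrow> (nat \<Rightarrow> 'b)) \<Rightarrow> bool" where
  "tunitary n J J' S \<longleftrightarrow> bij_betw S (clock_space n) (clock_space n) \<and>
     (\<forall>f\<in>clock_space n. \<forall>g\<in>clock_space n. S (tadd f g) = tadd (S f) (S g)) \<and>
     (\<forall>c. \<forall>f\<in>clock_space n. S (tcscale J c f) = tcscale J' c (S f)) \<and>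
     (\<forall>f\<in>clock_space n. tnorm n (S f) = tnorm n f)"

text \<open>matrix of the shift X_n in the time basis: X_n |j> = |(j+1) mod n>\<close>
definition shift_mat :: "nat \<Rightarrow> nat \<Rightarrow> nat \<Rightarrow> complex" where
  "shift_mat n k j = (if k = (j + 1) mod n then 1 else 0)"

definition tensor_op :: "nat \<Rightarrow> ('a::real_vector \<Rightarrow> 'a) \<Rightarrow> (nat \<Rightarrow> nat \<Rightarrow> complex)
    \<Rightarrow> ('a \<Rightarrow> 'a) \<Rightarrow> (nat \<Rightarrow> 'a) \<Rightarrow> nat \<Rightarrow> 'a" where
  "tensor_op n J A B f = (\<lambda>k. if k < n then (\<Sum>j<n. cscale J (A k j) (B (f j))) else 0)"

end

(* S can be taken block diagonal in the time basis: on the slot |k> it acts as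
   U_r'^k W U_r^(-k), where W : H_r -> H_r' is any unitary with W psi(0) = psi'(0).
   Such a W exists because Hilbert spaces with orthonormal bases of equal cardinality are
   unitarily isomorphic (transport the basis and extend by continuity from its span) and
   the unitary group acts transitively on unit vectors (a phase followed by a complex
   reflection). Cyclicity makes U_r^(n-k) an inverse of U_r^k, which lets the blocks
   intertwine X_n (x) U_r with X_n' (x) U_r' also across the wrap-around n-1 -> 0. *)

theory Submission
  imports Defs
begin

section \<open>Complex structures\<close>

lemma complex_structure_linear: "complex_structure J \<Longrightarrow> linear J"
  by (simp add: complex_structure_def)

lemma complex_structure_twice: "complex_structure J \<Longrightarrow> J (J x) = - x"
  by (simp add: complex_structure_def)

lemma complex_structure_inner: "complex_structure J \<Longrightarrow> inner (J x) (J y) = inner x y"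
  by (simp add: complex_structure_def)

lemma complex_structure_add: "complex_structure J \<Longrightarrow> J (x + y) = J x + J y"
  using complex_structure_linear linear_add by blast

lemma complex_structure_diff: "complex_structure J \<Longrightarrow> J (x - y) = J x - J y"
  using complex_structure_linear linear_diff by blast

lemma complex_structure_scaleR: "complex_structure J \<Longrightarrow> J (r *\<^sub>R x) = r *\<^sub>R J x"
  using complex_structure_linear linear_scale by blast

lemma inner_complex_structure_right:
  assumes "complex_structure J" shows "inner x (J y) = - inner (J x) y"
  using complex_structure_inner[OF assms, of x "J y"] by (simp add: complex_structure_twice[OF assms])

lemma inner_complex_structure_self: "complex_structure J \<Longrightarrow> inner (J x) x = 0"
  using inner_complex_structure_right[of J x x] by (simp add: inner_commute)

lemma norm_complex_structure: "complex_structure J \<Longrightarrow> norm (J x) = norm x"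
  by (simp add: norm_eq_sqrt_inner complex_structure_inner)

lemma bounded_linear_complex_structure:
  assumes "complex_structure J" shows "bounded_linear J"
  by (rule bounded_linear_intro[where K=1])
    (simp_all add: assms complex_structure_add complex_structure_scaleR norm_complex_structure)

lemma cscale_one [simp]: "cscale J 1 x = x"
  and cscale_zero_left [simp]: "cscale J 0 x = 0"
  and cscale_of_real: "cscale J (complex_of_real r) x = r *\<^sub>R x"
  and cscale_add_left: "cscale J (a + b) x = cscale J a x + cscale J b x"
  by (simp_all add: cscale_def algebra_simps)

lemma cscale_add_right: "complex_structure J \<Longrightarrow> cscale J c (x + y) = cscale J c x + cscale J c y"
  by (simp add: cscale_def complex_structure_add scaleR_add_right)

lemma cscale_zero_right: "complex_structure J \<Longrightarrow> cscale J c 0 = 0"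
  using cscale_add_right[of J c 0 0] by simp

lemma cscale_cscale: "complex_structure J \<Longrightarrow> cscale J a (cscale J b x) = cscale J (a * b) x"
  by (simp add: cscale_def complex_structure_add complex_structure_scaleR complex_structure_twice
      algebra_simps)

lemma cscale_sum_right:
  "complex_structure J \<Longrightarrow> cscale J c (\<Sum>i\<in>F. f i) = (\<Sum>i\<in>F. cscale J c (f i))"
  by (induction F rule: infinite_finite_induct)
    (simp_all add: cscale_zero_right cscale_add_right)

lemma bounded_linear_cscale:
  assumes "complex_structure J" shows "bounded_linear (cscale J c)"
  unfolding cscale_def[abs_def]
  by (intro bounded_linear_add bounded_linear_scaleR_right bounded_linear_ident
      bounded_linear_compose[OF bounded_linear_scaleR_right bounded_linear_complex_structure[OF assms]])

lemma cinner_cscale_left: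
  "complex_structure J \<Longrightarrow> cinner J (cscale J c x) y = cnj c * cinner J x y"
  by (simp add: cinner_def cscale_def complex_eq_iff complex_structure_add complex_structure_scaleR
      complex_structure_twice inner_add_left algebra_simps)

lemma cinner_cscale_right:
  "complex_structure J \<Longrightarrow> cinner J x (cscale J c y) = c * cinner J x y"
  by (simp add: cinner_def cscale_def complex_eq_iff inner_add_right complex_structure_inner
      inner_complex_structure_right algebra_simps)

lemma cinner_add_right: "cinner J x (y + z) = cinner J x y + cinner J x z"
  by (simp add: cinner_def complex_eq_iff inner_add_right)

lemma cinner_self: "complex_structure J \<Longrightarrow> cinner J x x = complex_of_real (inner x x)"
  by (simp add: cinner_def complex_eq_iff inner_complex_structure_self)

lemma inner_eq_Re_cinner: "inner x y = Re (cinner J x y)"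
  and inner_complex_structure_eq_Im_cinner: "inner (J x) y = Im (cinner J x y)"
  by (simp_all add: cinner_def)

lemma inner_cscale_cscale:
  "complex_structure J \<Longrightarrow> inner (cscale J a x) (cscale J b y) = Re (cnj a * b * cinner J x y)"
  by (simp add: inner_eq_Re_cinner[of _ _ J] cinner_cscale_left cinner_cscale_right algebra_simps)

lemma norm_cscale:
  assumes "complex_structure J" shows "norm (cscale J c x) = cmod c * norm x"
proof -
  have "(norm (cscale J c x))\<^sup>2 = Re (cnj c * c * complex_of_real (inner x x))"
    by (simp add: power2_norm_eq_inner inner_cscale_cscale cinner_self assms)
  also have "\<dots> = (cmod c * norm x)\<^sup>2"
    by (simp add: mult.commute[of "cnj c"] complex_norm_square[symmetric] power2_norm_eq_inner
        power_mult_distrib)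
  finally show ?thesis by (simp add: power2_eq_imp_eq)
qed

section \<open>Unitary maps and their extension from dense subspaces\<close>

lemma cunitary_diff:
  assumes "cunitary J J' U" shows "U (x - y) = U x - U y"
proof -
  have "U (x - y) + U y = U x" using assms unfolding cunitary_def by (metis diff_add_cancel)
  then show ?thesis by (metis add_diff_cancel)
qed

lemma cunitary_zero: "cunitary J J' U \<Longrightarrow> U 0 = 0"
  using cunitary_diff[of J J' U 0 0] by simp

lemma cunitary_inj:
  assumes "cunitary J J' U" shows "inj U"
proof (rule injI)
  fix x y assume "U x = U y"
  then have "norm (U (x - y)) = 0" using cunitary_diff[OF assms] by simp
  then show "x = y" using assms unfolding cunitary_def by simp
qed

lemma cunitary_comp: "cunitary J1 J2 A \<Longrightarrow> cunitary J2 J3 B \<Longrightarrow> cunitary J1 J3 (B \<circ> A)"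
  unfolding cunitary_def by (metis comp_apply comp_surj)

lemma cunitary_funpow:
  assumes "cunitary J J U" shows "cunitary J J (U ^^ k)"
proof (induction k)
  case 0 show ?case by (simp add: cunitary_def)
next
  case (Suc k) show ?case
    unfolding funpow.simps(2) by (rule cunitary_comp[OF Suc assms])
qed

lemma cunitaryI:
  assumes "complex_structure J'" "linear U" "\<And>x. U (J x) = J' (U x)"
    and "\<And>x. norm (U x) = norm x" "surj U"
  shows "cunitary J J' U"
  using assms by (simp add: cunitary_def cscale_def linear_add linear_scale)

lemma cunitary_cscale:
  assumes J: "complex_structure J" and c: "cmod c = 1"
  shows "cunitary J J (cscale J c)"
  unfolding cunitary_def
proof (intro conjI allI)
  have "cscale J c (cscale J (cnj c) x) = x" for x
    using c by (simp add: cscale_cscale[OF J] complex_mult_cnj cmod_def)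
  then show "surj (cscale J c)" by (metis surjI)
  show "cscale J c (x + y) = cscale J c x + cscale J c y" for x y
    by (rule cscale_add_right[OF J])
  show "cscale J c (cscale J d x) = cscale J d (cscale J c x)" for d x
    by (simp add: cscale_cscale[OF J] mult.commute)
  show "norm (cscale J c x) = norm x" for x
    by (simp add: norm_cscale[OF J] c)
qed

lemma continuous_vanishing_on_dense:
  fixes f :: "'a::topological_space \<Rightarrow> 'b::{t1_space,zero}"
  assumes "closure D = UNIV" "continuous_on UNIV f" "\<And>x. x \<in> D \<Longrightarrow> f x = 0"
  shows "f x = 0"
  using continuous_constant_on_closure[of D f] assms by simp

lemma surj_isometry_dense_range:
  fixes g :: "'a::{real_normed_vector,complete_space} \<Rightarrow> 'b::real_normed_vector"
  assumes "bounded_linear g" "\<And>x. norm (g x) = norm x" "closure (g ` D) = UNIV"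
  shows "surj g"
proof -
  have "complete (range g)"
    by (rule complete_isometric_image[where e=1]) (use assms complete_UNIV in auto)
  then have "closed (range g)" by (rule complete_imp_closed)
  then have "closure (g ` D) \<subseteq> range g" by (simp add: closure_minimal image_mono)
  then show ?thesis using assms(3) by auto
qed

lemma additive_isometry_extension:
  fixes T :: "'a::real_normed_vector \<Rightarrow> 'b::{real_normed_vector,complete_space}"
  assumes "closure D = UNIV"
    and "\<And>x y. x \<in> D \<Longrightarrow> y \<in> D \<Longrightarrow> x - y \<in> D"
    and "\<And>x y. x \<in> D \<Longrightarrow> y \<in> D \<Longrightarrow> T (x - y) = T x - T y"
    and "\<And>x. x \<in> D \<Longrightarrow> norm (T x) = norm x"
  obtains g where "continuous_on UNIV g" "\<And>x. x \<in> D \<Longrightarrow> g x = T x"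
proof -
  have "uniformly_continuous_on D T"
    unfolding uniformly_continuous_on_def dist_norm by (metis assms(2-4))
  then obtain g where "uniformly_continuous_on (closure D) g" "\<And>x. x \<in> D \<Longrightarrow> g x = T x"
    using uniformly_continuous_on_extension_on_closure by metis
  then show ?thesis using that assms(1) uniformly_continuous_imp_continuous by metis
qed

lemma additive_from_dense:
  fixes g :: "'a::real_normed_vector \<Rightarrow> 'b::real_normed_vector"
  assumes dense: "closure D = UNIV" and g: "continuous_on UNIV g"
    and add: "\<And>x y. x \<in> D \<Longrightarrow> y \<in> D \<Longrightarrow> g (x + y) = g x + g y"
  shows "g (x + y) = g x + g y"
proof -
  note vanish = continuous_vanishing_on_dense[OF dense]
  have cont_left: "continuous_on UNIV (\<lambda>x. g (x + y) - g x - g y)" for y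
    by (intro continuous_intros continuous_on_compose2[OF g]) auto
  have cont_right: "continuous_on UNIV (\<lambda>y. g (x + y) - g x - g y)" for x
    by (intro continuous_intros continuous_on_compose2[OF g]) auto
  have "g (x + y) - g x - g y = 0" if "y \<in> D" for x y
    by (rule vanish[OF cont_left]) (simp add: add that)
  then have "g (x + y) - g x - g y = 0" by (rule vanish[OF cont_right])
  then show ?thesis by (simp add: algebra_simps)
qed

lemma cunitary_extend_dense:
  fixes T :: "'a::{real_inner,complete_space} \<Rightarrow> 'b::{real_inner,complete_space}"
  assumes J: "complex_structure J" and J': "complex_structure J'"
    and dense: "closure D = UNIV"
    and D_add: "\<And>x y. x \<in> D \<Longrightarrow> y \<in> D \<Longrightarrow> x + y \<in> D"
    and D_cscale: "\<And>c x. x \<in> D \<Longrightarrow> cscale J c x \<in> D"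
    and T_add: "\<And>x y. x \<in> D \<Longrightarrow> y \<in> D \<Longrightarrow> T (x + y) = T x + T y"
    and T_cscale: "\<And>c x. x \<in> D \<Longrightarrow> T (cscale J c x) = cscale J' c (T x)"
    and T_norm: "\<And>x. x \<in> D \<Longrightarrow> norm (T x) = norm x"
    and dense_range: "closure (T ` D) = UNIV"
  obtains g where "cunitary J J' g" "\<And>x. x \<in> D \<Longrightarrow> g x = T x"
proof -
  have D_diff: "x - y \<in> D" if "x \<in> D" "y \<in> D" for x y
    using D_add[OF that(1) D_cscale[OF that(2), of "-1"]] by (simp add: cscale_def)
  have T_diff: "T (x - y) = T x - T y" if "x \<in> D" "y \<in> D" for x y
    using T_add[OF D_diff[OF that] that(2)] by (simp add: algebra_simps)
  obtain g where g_cont: "continuous_on UNIV g" and gT: "\<And>x. x \<in> D \<Longrightarrow> g x = T x"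
    using additive_isometry_extension[OF dense D_diff T_diff T_norm] by blast
  note vanish = continuous_vanishing_on_dense[OF dense]
  have g_norm: "norm (g x) = norm x" for x
    using vanish[where f="\<lambda>x. norm (g x) - norm x"] g_cont gT T_norm
    by (simp add: continuous_intros)
  have g_add: "g (x + y) = g x + g y" for x y
    by (rule additive_from_dense[OF dense g_cont]) (simp add: gT T_add D_add)
  have g_cscale: "g (cscale J c x) = cscale J' c (g x)" for c x
  proof -
    have "continuous_on UNIV (\<lambda>x. g (cscale J c x) - cscale J' c (g x))"
      by (intro continuous_intros continuous_on_compose2[OF g_cont]
          continuous_on_compose2[OF linear_continuous_on[OF bounded_linear_cscale[OF J']]]
          linear_continuous_on[OF bounded_linear_cscale[OF J]]) auto
    then have "g (cscale J c x) - cscale J' c (g x) = 0"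
      by (rule vanish) (simp add: gT T_cscale D_cscale)
    then show ?thesis by (simp add: algebra_simps)
  qed
  have "bounded_linear g"
  proof (rule bounded_linear_intro[where K=1])
    show "g (r *\<^sub>R x) = r *\<^sub>R g x" for r x
      using g_cscale[of "complex_of_real r" x] by (simp add: cscale_of_real)
  qed (simp_all add: g_add g_norm)
  moreover have "closure (g ` D) = UNIV"
    using dense_range gT by (simp cong: image_cong)
  ultimately have "surj g" using g_norm surj_isometry_dense_range by blast
  then show ?thesis using that g_add g_cscale g_norm gT unfolding cunitary_def by blast
qed

section \<open>Orthonormal bases\<close>

lemma cinner_sum_right: "cinner J x (\<Sum>i\<in>F. f i) = (\<Sum>i\<in>F. cinner J x (f i))"
  by (induction F rule: infinite_finite_induct)
    (simp_all add: cinner_add_right, simp_all add: cinner_def complex_eq_iff)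

lemma cspanI: "finite F \<Longrightarrow> F \<subseteq> B \<Longrightarrow> (\<Sum>b\<in>F. cscale J (c b) b) \<in> cspan J B"
  unfolding cspan_def by blast

lemma cspan_add:
  assumes "x \<in> cspan J B" "y \<in> cspan J B" shows "x + y \<in> cspan J B"
proof -
  obtain F c G d where F: "finite F" "F \<subseteq> B" "x = (\<Sum>b\<in>F. cscale J (c b) b)"
    and G: "finite G" "G \<subseteq> B" "y = (\<Sum>b\<in>G. cscale J (d b) b)"
    using assms unfolding cspan_def by blast
  have extend: "(\<Sum>b\<in>H. cscale J (e b) b) = (\<Sum>b\<in>F \<union> G. cscale J (if b \<in> H then e b else 0) b)"
    if "H \<subseteq> F \<union> G" for H e
    by (rule sum.mono_neutral_cong_left) (use that F G in auto)
  have "x + y = (\<Sum>b\<in>F \<union> G. cscale J ((if b \<in> F then c b else 0) + (if b \<in> G then d b else 0)) b)"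
    using extend[of F c] extend[of G d] F G by (simp add: cscale_add_left sum.distrib)
  then show ?thesis using F G by (simp add: cspanI)
qed

lemma cspan_cscale:
  assumes "complex_structure J" "x \<in> cspan J B" shows "cscale J a x \<in> cspan J B"
proof -
  obtain F c where F: "finite F" "F \<subseteq> B" "x = (\<Sum>b\<in>F. cscale J (c b) b)"
    using assms unfolding cspan_def by blast
  then have "cscale J a x = (\<Sum>b\<in>F. cscale J (a * c b) b)"
    by (simp add: cscale_sum_right cscale_cscale assms)
  then show ?thesis using F by (simp add: cspanI)
qed

lemma cinner_onb_sum:
  assumes J: "complex_structure J" and B: "c_onb J B"
    and F: "finite F" "F \<subseteq> B" and b: "b \<in> B"
  shows "cinner J b (\<Sum>b'\<in>F. cscale J (c b') b') = (if b \<in> F then c b else 0)"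
proof -
  have "cinner J b (\<Sum>b'\<in>F. cscale J (c b') b') = (\<Sum>b'\<in>F. if b = b' then c b' else 0)"
    using B F b by (intro trans[OF cinner_sum_right sum.cong])
      (auto simp: cinner_cscale_right[OF J] c_onb_def)
  then show ?thesis using F by simp
qed

lemma norm_sum_onb:
  assumes J: "complex_structure J" and B: "c_onb J B" and F: "finite F"
    and h: "inj_on h F" "h ` F \<subseteq> B"
  shows "(norm (\<Sum>b\<in>F. cscale J (c b) (h b)))\<^sup>2 = (\<Sum>b\<in>F. (cmod (c b))\<^sup>2)"
proof -
  have "(norm (\<Sum>b\<in>F. cscale J (c b) (h b)))\<^sup>2
      = (\<Sum>b\<in>F. \<Sum>b'\<in>F. inner (cscale J (c b) (h b)) (cscale J (c b') (h b')))"
    by (simp add: power2_norm_eq_inner inner_sum_left inner_sum_right) (rule sum.swap)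
  also have "\<dots> = (\<Sum>b\<in>F. \<Sum>b'\<in>F. if b = b' then (cmod (c b))\<^sup>2 else 0)"
  proof (intro sum.cong refl)
    fix b b' assume "b \<in> F" "b' \<in> F"
    then have "cinner J (h b) (h b') = (if b = b' then 1 else 0)"
      using B h by (simp add: c_onb_def image_subset_iff inj_on_eq_iff)
    then show "inner (cscale J (c b) (h b)) (cscale J (c b') (h b'))
        = (if b = b' then (cmod (c b))\<^sup>2 else 0)"
      by (simp add: inner_cscale_cscale[OF J] complex_mult_cnj cmod_def power2_eq_square)
  qed
  also have "\<dots> = (\<Sum>b\<in>F. (cmod (c b))\<^sup>2)" using F by simp
  finally show ?thesis .
qed

text \<open>Only meaningful on cspan J B: elsewhere the index set may be infinite and the sum is 0.\<close>

definition onb_transfer ::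
    "('a::real_inner \<Rightarrow> 'a) \<Rightarrow> ('b::real_vector \<Rightarrow> 'b) \<Rightarrow> 'a set \<Rightarrow> ('a \<Rightarrow> 'b) \<Rightarrow> 'a \<Rightarrow> 'b" where
  "onb_transfer J J' B f x = (\<Sum>b\<in>{b\<in>B. cinner J b x \<noteq> 0}. cscale J' (cinner J b x) (f b))"

lemma onb_transfer_eq_sum:
  assumes "finite K" "K \<subseteq> B" "\<And>b. b \<in> B - K \<Longrightarrow> cinner J b x = 0"
  shows "onb_transfer J J' B f x = (\<Sum>b\<in>K. cscale J' (cinner J b x) (f b))"
  unfolding onb_transfer_def by (rule sum.mono_neutral_left) (use assms in auto)

lemma cinner_onb_cspan_support:
  assumes J: "complex_structure J" and B: "c_onb J B" and x: "x \<in> cspan J B"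
  obtains K where "finite K" "K \<subseteq> B" "\<And>b. b \<in> B - K \<Longrightarrow> cinner J b x = 0"
  using x cinner_onb_sum[OF J B] unfolding cspan_def by auto

lemma onb_transfer_sum:
  assumes J: "complex_structure J" and B: "c_onb J B" and F: "finite F" "F \<subseteq> B"
  shows "onb_transfer J J' B f (\<Sum>b\<in>F. cscale J (c b) b) = (\<Sum>b\<in>F. cscale J' (c b) (f b))"
proof -
  have "onb_transfer J J' B f (\<Sum>b\<in>F. cscale J (c b) b)
      = (\<Sum>b\<in>F. cscale J' (cinner J b (\<Sum>b'\<in>F. cscale J (c b') b')) (f b))"
    by (rule onb_transfer_eq_sum[OF F]) (simp add: cinner_onb_sum[OF J B F])
  also have "\<dots> = (\<Sum>b\<in>F. cscale J' (c b) (f b))"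
    using F by (intro sum.cong) (auto simp: cinner_onb_sum[OF J B F])
  finally show ?thesis .
qed

lemma onb_transfer_add:
  assumes J: "complex_structure J" and B: "c_onb J B"
    and x: "x \<in> cspan J B" and y: "y \<in> cspan J B"
  shows "onb_transfer J J' B f (x + y) = onb_transfer J J' B f x + onb_transfer J J' B f y"
proof -
  obtain F G where F: "finite F" "F \<subseteq> B" "\<And>b. b \<in> B - F \<Longrightarrow> cinner J b x = 0"
    and G: "finite G" "G \<subseteq> B" "\<And>b. b \<in> B - G \<Longrightarrow> cinner J b y = 0"
    by (metis cinner_onb_cspan_support[OF J B x] cinner_onb_cspan_support[OF J B y])
  have K: "finite (F \<union> G)" "F \<union> G \<subseteq> B" using F G by auto
  have x_K: "cinner J b x = 0" and y_K: "cinner J b y = 0" if "b \<in> B - (F \<union> G)" for b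
    using F(3) G(3) that by auto
  have "onb_transfer J J' B f (x + y) = (\<Sum>b\<in>F \<union> G. cscale J' (cinner J b (x + y)) (f b))"
    by (rule onb_transfer_eq_sum[OF K]) (use F G in \<open>simp add: cinner_add_right\<close>)
  also have "\<dots> = (\<Sum>b\<in>F \<union> G. cscale J' (cinner J b x) (f b))
      + (\<Sum>b\<in>F \<union> G. cscale J' (cinner J b y) (f b))"
    by (simp add: cinner_add_right cscale_add_left sum.distrib)
  also have "\<dots> = onb_transfer J J' B f x + onb_transfer J J' B f y"
    using onb_transfer_eq_sum[OF K x_K, where J'=J' and f=f]
      onb_transfer_eq_sum[OF K y_K, where J'=J' and f=f] by simp
  finally show ?thesis .
qed

lemma onb_transfer_cscale:
  assumes J: "complex_structure J" and J': "complex_structure J'"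
    and B: "c_onb J B" and x: "x \<in> cspan J B"
  shows "onb_transfer J J' B f (cscale J a x) = cscale J' a (onb_transfer J J' B f x)"
proof -
  obtain F where F: "finite F" "F \<subseteq> B" "\<And>b. b \<in> B - F \<Longrightarrow> cinner J b x = 0"
    using cinner_onb_cspan_support[OF J B x] by blast
  have "onb_transfer J J' B f (cscale J a x) = (\<Sum>b\<in>F. cscale J' (cinner J b (cscale J a x)) (f b))"
    by (rule onb_transfer_eq_sum[OF F(1,2)]) (simp add: F(3) cinner_cscale_right[OF J])
  also have "\<dots> = cscale J' a (\<Sum>b\<in>F. cscale J' (cinner J b x) (f b))"
    by (simp add: cinner_cscale_right[OF J] cscale_sum_right[OF J'] cscale_cscale[OF J'])
  also have "\<dots> = cscale J' a (onb_transfer J J' B f x)"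
    using onb_transfer_eq_sum[OF F, where J'=J' and f=f] by simp
  finally show ?thesis .
qed

lemma norm_onb_transfer:
  assumes J: "complex_structure J" and J': "complex_structure J'"
    and B: "c_onb J B" and B': "c_onb J' B'" and f: "inj_on f B" "f ` B \<subseteq> B'"
    and x: "x \<in> cspan J B"
  shows "norm (onb_transfer J J' B f x) = norm x"
proof -
  obtain F c where F: "finite F" "F \<subseteq> B" and x_eq: "x = (\<Sum>b\<in>F. cscale J (c b) b)"
    using x unfolding cspan_def by blast
  have f_F: "inj_on f F" "f ` F \<subseteq> B'" using f F by (auto intro: inj_on_subset)
  have "(norm (onb_transfer J J' B f x))\<^sup>2 = (\<Sum>b\<in>F. (cmod (c b))\<^sup>2)"
    unfolding x_eq onb_transfer_sum[OF J B F] by (rule norm_sum_onb[OF J' B' F(1) f_F])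
  also have "\<dots> = (norm x)\<^sup>2"
    using norm_sum_onb[OF J B F(1), of id] F by (simp add: x_eq)
  finally show ?thesis by (simp add: power2_eq_imp_eq)
qed

lemma cspan_subset_image_onb_transfer:
  assumes J: "complex_structure J" and B: "c_onb J B" and f: "bij_betw f B B'"
  shows "cspan J' B' \<subseteq> onb_transfer J J' B f ` cspan J B"
proof
  fix y assume "y \<in> cspan J' B'"
  then obtain F' c where F': "finite F'" "F' \<subseteq> B'" and y: "y = (\<Sum>b'\<in>F'. cscale J' (c b') b')"
    unfolding cspan_def by blast
  define F where "F = inv_into B f ` F'"
  have fB: "inj_on f B" "f ` B = B'" using f by (auto simp: bij_betw_def)
  have F: "finite F" "F \<subseteq> B" using F' fB by (auto simp: F_def inv_into_into)
  have f_F: "inj_on f F" using fB(1) F(2) by (rule inj_on_subset)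
  have f_F_eq: "f ` F = F'"
    unfolding F_def using fB(2) F'(2) by (rule image_inv_into_cancel)
  have "y = onb_transfer J J' B f (\<Sum>b\<in>F. cscale J (c (f b)) b)"
    unfolding onb_transfer_sum[OF J B F(1,2)] y
    using sum.reindex[OF f_F, of "\<lambda>b'. cscale J' (c b') b'"] f_F_eq by simp
  then show "y \<in> onb_transfer J J' B f ` cspan J B"
    using F by (simp add: cspanI)
qed

lemma cunitary_onb_bij:
  fixes J :: "'a::{real_inner,complete_space} \<Rightarrow> 'a" and J' :: "'b::{real_inner,complete_space} \<Rightarrow> 'b"
  assumes J: "complex_structure J" and J': "complex_structure J'"
    and B: "c_onb J B" and B': "c_onb J' B'" and f: "bij_betw f B B'"
  obtains g where "cunitary J J' g" "\<And>b. b \<in> B \<Longrightarrow> g b = f b"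
proof -
  let ?T = "onb_transfer J J' B f"
  have "closure (cspan J' B') \<subseteq> closure (?T ` cspan J B)"
    by (rule closure_mono[OF cspan_subset_image_onb_transfer[OF J B f]])
  then have dense_range: "closure (?T ` cspan J B) = UNIV"
    using B' by (auto simp: c_onb_def)
  have inj: "inj_on f B" and into: "f ` B \<subseteq> B'" using f by (auto simp: bij_betw_def)
  have dense: "closure (cspan J B) = UNIV" using B by (simp add: c_onb_def)
  obtain g where g: "cunitary J J' g" and gT: "\<And>x. x \<in> cspan J B \<Longrightarrow> g x = ?T x"
    using cunitary_extend_dense[OF J J' dense cspan_add cspan_cscale[OF J] onb_transfer_add[OF J B]
        onb_transfer_cscale[OF J J' B] norm_onb_transfer[OF J J' B B' inj into] dense_range]
    by blast
  have "g b = f b" if "b \<in> B" for b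
  proof -
    have "g b = ?T b" using gT[OF cspanI[of "{b}" B J "\<lambda>_. 1"]] that by simp
    also have "\<dots> = f b" using onb_transfer_sum[OF J B, of "{b}" J' f "\<lambda>_. 1"] that by simp
    finally show ?thesis .
  qed
  then show ?thesis using g that by blast
qed

lemma same_hilbert_dim_cunitary:
  fixes J :: "'a::{real_inner,complete_space} \<Rightarrow> 'a" and J' :: "'b::{real_inner,complete_space} \<Rightarrow> 'b"
  assumes "complex_structure J" "complex_structure J'" "same_hilbert_dim J J'"
  obtains g where "cunitary J J' g"
  using assms(3) cunitary_onb_bij[OF assms(1,2)] unfolding same_hilbert_dim_def by blast

section \<open>Transitivity on spheres\<close>

text \<open>x - 2 P x, where P is the orthogonal projection onto the complex line spanned by w,
  i.e. onto span {w, J w}.\<close>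

definition creflect :: "('a::real_inner \<Rightarrow> 'a) \<Rightarrow> 'a \<Rightarrow> 'a \<Rightarrow> 'a" where
  "creflect J w x = x - (2 / inner w w) *\<^sub>R (inner w x *\<^sub>R w + inner (J w) x *\<^sub>R J w)"

lemma creflect_zero [simp]: "creflect J 0 x = x"
  by (simp add: creflect_def)

lemma linear_creflect: "linear (creflect J w)"
  by (rule linearI) (simp_all add: creflect_def inner_add_right algebra_simps)

lemma inner_creflect:
  assumes J: "complex_structure J" and w: "w \<noteq> 0"
  shows "inner w (creflect J w x) = - inner w x"
    and "inner (J w) (creflect J w x) = - inner (J w) x"
  using w by (simp_all add: creflect_def inner_diff_right inner_add_right field_simps
      inner_complex_structure_self[OF J] complex_structure_inner[OF J] inner_commute[of w "J w"])

lemma creflect_creflect: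
  assumes J: "complex_structure J" shows "creflect J w (creflect J w x) = x"
proof (cases "w = 0")
  case False
  then show ?thesis
    by (simp add: creflect_def[of J w "creflect J w x"] inner_creflect[OF J False])
      (simp add: creflect_def algebra_simps)
qed simp

lemma creflect_complex_structure:
  assumes J: "complex_structure J" shows "creflect J w (J x) = J (creflect J w x)"
  using inner_complex_structure_right[OF J, of w x]
  by (simp add: creflect_def complex_structure_diff[OF J] complex_structure_add[OF J]
      complex_structure_scaleR[OF J] complex_structure_twice[OF J] complex_structure_inner[OF J]
      algebra_simps)

lemma norm_creflect:
  assumes J: "complex_structure J" shows "norm (creflect J w x) = norm x"
proof (cases "w = 0")
  case False
  define s t where "s = inner w x" and "t = inner (J w) x"
  have "inner (creflect J w x) (creflect J w x)
      = inner x (creflect J w x) + (2 / inner w w) * (s * s + t * t)"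
    using inner_creflect[OF J False, of x]
    by (simp add: creflect_def[of J w x] inner_diff_left inner_add_left s_def t_def
        minus_divide_left)
  also have "inner x (creflect J w x) = inner x x - (2 / inner w w) * (s * s + t * t)"
    by (simp add: creflect_def inner_diff_right inner_add_right s_def t_def inner_commute)
  finally show ?thesis by (simp add: norm_eq_sqrt_inner)
qed simp

lemma cunitary_creflect: "complex_structure J \<Longrightarrow> cunitary J J (creflect J w)"
  by (rule cunitaryI[OF _ linear_creflect creflect_complex_structure norm_creflect])
    (assumption+, metis creflect_creflect surjI)

lemma creflect_swap:
  assumes J: "complex_structure J" and uv: "norm u = norm v" "inner (J u) v = 0"
  shows "creflect J (u - v) u = v"
proof (cases "u = v")
  case False
  define m where "m = inner v u"
  have uu: "inner u u = inner v v" using uv(1) by (simp add: norm_eq_sqrt_inner)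
  have "inner (u - v) (u - v) = 2 * (inner u u - m)"
    using uu by (simp add: m_def inner_diff_left inner_diff_right inner_commute)
  moreover have "inner (u - v) (u - v) \<noteq> 0" using False by simp
  moreover have "inner (u - v) u = inner u u - m" by (simp add: m_def inner_diff_left)
  moreover have "inner (J (u - v)) u = 0"
    using uv(2) inner_complex_structure_right[OF J, of v u] inner_complex_structure_self[OF J, of u]
    by (simp add: complex_structure_diff[OF J] inner_diff_left inner_diff_right inner_commute)
  ultimately show ?thesis by (simp add: creflect_def)
qed simp

lemma cunitary_transitive_sphere:
  assumes J: "complex_structure J" and uv: "norm u = norm v"
  obtains R where "cunitary J J R" "R u = v"
proof -
  define z where "z = cinner J u v"
  \<comment> \<open>the phase c makes cinner J u' v real, as needed for the reflection\<close>
  define c where "c = (if z = 0 then 1 else sgn z)"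
  have c: "cmod c = 1" by (simp add: c_def norm_sgn)
  define u' where "u' = cscale J c u"
  have "cnj c * z = complex_of_real (cmod z)"
  proof (cases "z = 0")
    case False
    have "Re z * Re z + Im z * Im z = cmod z * cmod z"
      using cmod_power2[of z] by (simp add: power2_eq_square)
    then show ?thesis using False by (simp add: c_def sgn_eq complex_eq_iff field_simps)
  qed (simp add: c_def)
  then have "cinner J u' v = complex_of_real (cmod z)"
    by (simp add: u'_def z_def cinner_cscale_left[OF J])
  then have "inner (J u') v = 0" by (simp add: inner_complex_structure_eq_Im_cinner)
  moreover have "norm u' = norm v" by (simp add: u'_def norm_cscale[OF J] c uv)
  ultimately have "creflect J (u' - v) u' = v"
    using creflect_swap[OF J] by blast
  then have "(creflect J (u' - v) \<circ> cscale J c) u = v" by (simp add: u'_def)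
  then show ?thesis
    using that cunitary_comp[OF cunitary_cscale[OF J c] cunitary_creflect[OF J]] by blast
qed

section \<open>Block-diagonal operators on the clock space\<close>

definition tdiag :: "nat \<Rightarrow> (nat \<Rightarrow> 'a \<Rightarrow> 'b::zero) \<Rightarrow> (nat \<Rightarrow> 'a) \<Rightarrow> nat \<Rightarrow> 'b" where
  "tdiag n V f = (\<lambda>k. if k < n then V k (f k) else 0)"

lemma tdiag_in_clock_space: "tdiag n V f \<in> clock_space n"
  by (simp add: tdiag_def clock_space_def)

lemma bij_betw_tdiag:
  assumes "\<And>k. k < n \<Longrightarrow> bij (V k)"
  shows "bij_betw (tdiag n V) (clock_space n) (clock_space n)"
proof (rule bij_betw_byWitness[where f'="tdiag n (\<lambda>k. inv (V k))"])
  show "\<forall>f\<in>clock_space n. tdiag n (\<lambda>k. inv (V k)) (tdiag n V f) = f"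
    using assms by (auto simp: tdiag_def clock_space_def bij_is_inj)
  show "\<forall>g\<in>clock_space n. tdiag n V (tdiag n (\<lambda>k. inv (V k)) g) = g"
    using assms by (auto simp: tdiag_def clock_space_def bij_is_surj surj_f_inv_f)
qed (auto simp: tdiag_in_clock_space)

lemma tunitary_tdiag:
  assumes J': "complex_structure J'" and V: "\<And>k. k < n \<Longrightarrow> cunitary J J' (V k)"
  shows "tunitary n J J' (tdiag n V)"
  unfolding tunitary_def
proof (intro conjI ballI allI)
  have "bij (V k)" if "k < n" for k
    using cunitary_inj[OF V[OF that]] V[OF that] by (simp add: bij_def cunitary_def)
  then show "bij_betw (tdiag n V) (clock_space n) (clock_space n)" by (rule bij_betw_tdiag)
qed (use V in \<open>auto simp: tdiag_def tadd_def tcscale_def tnorm_def cunitary_def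
    cscale_zero_right[OF J']\<close>)

lemma tdiag_ket:
  assumes "\<tau> < n" "\<And>k. k < n \<Longrightarrow> V k 0 = 0"
  shows "tdiag n V (ket \<tau> x) = ket \<tau> (V \<tau> x)"
  using assms by (auto simp: tdiag_def ket_def)

lemma tensor_shift_Suc_mod:
  assumes "j < n"
  shows "tensor_op n J (shift_mat n) U f (Suc j mod n) = U (f j)"
proof -
  have "Suc j mod n = (i + 1) mod n \<longleftrightarrow> i = j" if "i < n" for i
    using assms that by (cases "Suc i = n"; cases "Suc j = n") auto
  then have "tensor_op n J (shift_mat n) U f (Suc j mod n)
      = (\<Sum>i<n. cscale J (if i = j then 1 else 0) (U (f i)))"
    using assms by (auto simp: tensor_op_def shift_mat_def intro!: sum.cong)
  also have "\<dots> = (\<Sum>i<n. if i = j then U (f i) else 0)" by (intro sum.cong) auto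
  also have "\<dots> = U (f j)" using assms by simp
  finally show ?thesis .
qed

lemma tdiag_tensor_shift:
  assumes "\<And>j x. j < n \<Longrightarrow> V (Suc j mod n) (U x) = U' (V j x)"
  shows "tdiag n V (tensor_op n J (shift_mat n) U f)
    = tensor_op n J' (shift_mat n) U' (tdiag n V f)"
proof
  fix k show "tdiag n V (tensor_op n J (shift_mat n) U f) k
      = tensor_op n J' (shift_mat n) U' (tdiag n V f) k"
  proof (cases "k < n")
    case True
    define j where "j = (if k = 0 then n - 1 else k - 1)"
    have "j < n" "k = Suc j mod n" using True by (auto simp: j_def)
    then show ?thesis
      by (simp add: tdiag_def tensor_shift_Suc_mod assms)
  qed (simp add: tdiag_def tensor_op_def)
qed

text \<open>For V k = U'^k \<circ> W \<circ> U^(n-k) this reads V ((j+1) mod n) \<circ> U = U' \<circ> V j;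
  the wrap-around j = n - 1 is where both cyclicity conditions enter.\<close>

lemma cyclic_conjugation_intertwines:
  assumes U: "U ^^ n = id" and U': "U' ^^ n = id" and j: "j < n"
  shows "(U' ^^ (Suc j mod n)) (W ((U ^^ (n - Suc j mod n)) (U x)))
    = U' ((U' ^^ j) (W ((U ^^ (n - j)) x)))"
proof (cases "Suc j = n")
  case True
  then have "U' ((U' ^^ j) y) = y" for y using U' by (metis comp_apply funpow.simps(2) id_apply)
  moreover have "n - j = 1" using True by simp
  ultimately show ?thesis using True U by simp
next
  case False
  then have "Suc j < n" and n_j: "n - j = Suc (n - Suc j)" using j by auto
  moreover have "(U ^^ (n - Suc j)) (U x) = (U ^^ (n - j)) x"
    unfolding n_j by (simp only: funpow_Suc_right comp_apply)
  ultimately show ?thesis by simp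
qed

lemma funpow_cyclic_cancel:
  assumes "f ^^ n = id" "k \<le> n"
  shows "(f ^^ (n - k)) ((f ^^ k) x) = x"
proof -
  have "(f ^^ (n - k)) ((f ^^ k) x) = (f ^^ (n - k + k)) x" by (simp only: funpow_add comp_apply)
  then show ?thesis using assms by simp
qed

lemma bij_betw_intertwines_inv_into:
  assumes "bij_betw S X Y" "\<And>h. h \<in> X \<Longrightarrow> S (A h) = A' (S h)" "g \<in> Y"
  shows "A' g = S (A (inv_into X S g))"
proof -
  have "g \<in> S ` X" using assms(1,3) by (simp add: bij_betw_def)
  then have "inv_into X S g \<in> X" "S (inv_into X S g) = g"
    by (simp_all add: inv_into_into f_inv_into_f)
  then show ?thesis using assms(2) by simp
qed

theorem theorem1:
  fixes n :: nat
    and J :: "'a::{real_inner,complete_space} \<Rightarrow> 'a"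
    and J' :: "'b::{real_inner,complete_space} \<Rightarrow> 'b"
    and Ur :: "'a \<Rightarrow> 'a" and Ur' :: "'b \<Rightarrow> 'b"
    and \<psi>0 :: 'a and \<psi>0' :: 'b
  assumes "n \<ge> 1"
    and "separable_hilbert J" and "separable_hilbert J'"
    and "same_hilbert_dim J J'"
    and "cunitary J J Ur" and "cunitary J' J' Ur'"
    and "Ur ^^ n = id" and "Ur' ^^ n = id"
    and "norm \<psi>0 = 1" and "norm \<psi>0' = 1"
  shows "\<exists>S. tunitary n J J' S \<and>
     (\<forall>\<tau><n. ket \<tau> ((Ur' ^^ \<tau>) \<psi>0') = S (ket \<tau> ((Ur ^^ \<tau>) \<psi>0))) \<and>
     (\<forall>g\<in>clock_space n. tensor_op n J' (shift_mat n) Ur' g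
          = S (tensor_op n J (shift_mat n) Ur (inv_into (clock_space n) S g)))"
proof -
  have J: "complex_structure J" and J': "complex_structure J'"
    using assms(2,3) by (simp_all add: separable_hilbert_def)
  obtain T where T: "cunitary J J' T" using same_hilbert_dim_cunitary[OF J J' assms(4)] .
  have "norm (T \<psi>0) = norm \<psi>0'" using T assms(9,10) by (simp add: cunitary_def)
  then obtain R where R: "cunitary J' J' R" "R (T \<psi>0) = \<psi>0'"
    using cunitary_transitive_sphere[OF J'] by blast
  define W where "W = R \<circ> T"
  define V where "V k = Ur' ^^ k \<circ> W \<circ> Ur ^^ (n - k)" for k
  define S where "S = tdiag n V"
  have V: "cunitary J J' (V k)" for k
    unfolding V_def W_def by (rule cunitary_comp cunitary_funpow T R(1) assms(5,6))+
  have S: "tunitary n J J' S" unfolding S_def using J' V by (rule tunitary_tdiag)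
  have ket: "ket \<tau> ((Ur' ^^ \<tau>) \<psi>0') = S (ket \<tau> ((Ur ^^ \<tau>) \<psi>0))" if "\<tau> < n" for \<tau>
    using R(2) funpow_cyclic_cancel[OF assms(7), of \<tau> \<psi>0] that
    by (simp add: S_def tdiag_ket[of \<tau> n V, OF that cunitary_zero[OF V]] V_def W_def)
  have shift: "S (tensor_op n J (shift_mat n) Ur h) = tensor_op n J' (shift_mat n) Ur' (S h)" for h
    unfolding S_def
    by (rule tdiag_tensor_shift) (simp add: V_def cyclic_conjugation_intertwines assms(7,8))
  have "tensor_op n J' (shift_mat n) Ur' g
      = S (tensor_op n J (shift_mat n) Ur (inv_into (clock_space n) S g))"
    if "g \<in> clock_space n" for g
    using S unfolding tunitary_def
    by (intro bij_betw_intertwines_inv_into[of S "clock_space n" "clock_space n"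
          "tensor_op n J (shift_mat n) Ur" "tensor_op n J' (shift_mat n) Ur'" g])
      (simp_all add: shift that)
  then show ?thesis using S ket by blast
qed

end
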